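(* Let $\mathbb{X}=\{1,2,3,\dots\}$, $\alpha>0$, and let $\mu\in\mathcal{P}(\mathbb{X})$ satisfy, for some constants $0<k_0\le k_1$ and some $N>0$, $k_0e^{-\alpha x}\le\mu(\{x\})\le k_1e^{-\alpha x}$ for all $x\ge N$. Let $\epsilon_n=n^{-\tau}$ with $\tau\in(0,1/2)$. Then $$|H(\mu)-H(\hat\mu_{n,\epsilon_n})|=O(n^{-\tau}\log n),\qquad\mathbb{P}_\mu\text{-a.s.}$$
   Context: For a probability $\mu$ on $\mathbb{X}$, $f_\mu(x)=\mu(\{x\})$, $A_\mu=\{x:f_\mu(x)>0\}$, and $H(\mu)=-\sum_{x\in A_\mu}f_\mu(x)\log f_\mu(x)$ ($\log$ to a fixed base $b>1$). Given i.i.d. $X_1,X_2,\dots\sim\mu$ with law $\mathbb{P}_\mu$, $\hat\mu_n(A)=\frac1n\sum_{k=1}^n\mathbb{1}_A(X_k)$ is the empirical measure. For $\epsilon>0$, $\Gamma_\epsilon=\{x\in\mathbb{X}:\hat\mu_n(\{x\})\ge\epsilon\}$ and $\hat\mu_{n,\epsilon}=\hat\mu_n(\cdot\mid\Gamma_\epsilon)$, i.e. $\hat\mu_{n,\epsilon}(A)=\hat\mu_n(A\cap\Gamma_\epsilon)/\hat\mu_n(\Gamma_\epsilon)$ (defined arbitrarily when $\Gamma_\epsilon=\emptyset$). *)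

theory Defs
  imports "HOL-Probability.Probability" "HOL-Library.Landau_Symbols"
begin

definition entropy_pmf :: "real \<Rightarrow> ('b \<Rightarrow> real) \<Rightarrow> real" where
  "entropy_pmf b f = - infsum (\<lambda>x. f x * log b (f x)) {x. f x > 0}"

definition emp_mass :: "(nat \<Rightarrow> 'a \<Rightarrow> 'b) \<Rightarrow> nat \<Rightarrow> 'a \<Rightarrow> 'b \<Rightarrow> real" where
  "emp_mass X n \<omega> x = real (card {k. k < n \<and> X k \<omega> = x}) / real n"

definition Gamma_set :: "(nat \<Rightarrow> 'a \<Rightarrow> 'b) \<Rightarrow> nat \<Rightarrow> real \<Rightarrow> 'a \<Rightarrow> 'b set" where
  "Gamma_set X n \<epsilon> \<omega> = {x. emp_mass X n \<omega> x \<ge> \<epsilon>}"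

text \<open>Mass function of the empirical measure conditioned on Gamma_eps
  (chosen to be the zero function when Gamma_eps is empty).\<close>
definition cond_emp_mass :: "(nat \<Rightarrow> 'a \<Rightarrow> 'b) \<Rightarrow> nat \<Rightarrow> real \<Rightarrow> 'a \<Rightarrow> 'b \<Rightarrow> real" where
  "cond_emp_mass X n \<epsilon> \<omega> x =
     (if x \<in> Gamma_set X n \<epsilon> \<omega>
      then emp_mass X n \<omega> x / (\<Sum>y\<in>Gamma_set X n \<epsilon> \<omega>. emp_mass X n \<omega> y)
      else 0)"

end

theory Submission
  imports Defs "HOL-Real_Asymp.Real_Asymp"
begin

text \<open>
  By Hoeffding's inequality and Borel--Cantelli, almost surely the empirical masses of all atoms
  x \<le> n are eventually within n^(-\<beta>) of \<mu>, for a fixed \<beta> between \<tau> and 1/2.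
  The rest is deterministic. By the exponential tail, the atoms of empirical mass at least
  \<epsilon> = n^(-\<tau>) lie in a window of length m = O(log n), on which the empirical mass is
  within t = n^(-\<beta>) of \<mu>. Hence the normalizer of the conditioned measure is 1 + O(\<epsilon>)
  and the x log x terms on the window differ by O(m t log(1/\<epsilon>)) = o(\<epsilon>). The atoms lost
  by the truncation lie beyond the window or have mass below 2\<epsilon>; by the exponential tail
  they carry mass O(\<epsilon>) and entropy O(\<epsilon> log(1/\<epsilon>)) = O(n^(-\<tau>) log n).
\<close>

lemma abs_xlnx_diff_le:
  fixes u v d :: real
  assumes "0 < d" "d \<le> u" "u \<le> 1" "d \<le> v" "v \<le> 1"
  shows "\<bar>u * ln u - v * ln v\<bar> \<le> \<bar>u - v\<bar> * (ln (1/d) + 1)"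
proof -
  have ordered: "\<bar>x * ln x - y * ln y\<bar> \<le> (x - y) * (ln (1/d) + 1)"
    if "d \<le> y" "y \<le> x" "x \<le> 1" for x y
  proof -
    have y: "0 < y" using that \<open>0 < d\<close> by linarith
    have "y * (ln x - ln y) \<le> y * (x / y - 1)"
      using ln_le_minus_one[of "x / y"] y that by (intro mult_left_mono) (auto simp: ln_div)
    also have "\<dots> = x - y" using y by (simp add: field_simps)
    finally have upper: "y * (ln x - ln y) \<le> x - y" .
    have lower: "0 \<le> y * (ln x - ln y)" using y that by simp
    have "ln d \<le> ln x" "ln x \<le> 0" using that \<open>0 < d\<close> by auto
    then have "(x - y) * ln d \<le> (x - y) * ln x" "(x - y) * ln x \<le> 0"
      using that by (auto intro: mult_left_mono mult_nonneg_nonpos)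
    moreover have "x * ln x - y * ln y = (x - y) * ln x + y * (ln x - ln y)"
      by (simp add: algebra_simps)
    moreover have "ln (1/d) = - ln d" using \<open>0 < d\<close> by (simp add: ln_div)
    ultimately show ?thesis using upper lower by (simp add: abs_le_iff algebra_simps)
  qed
  show ?thesis
  proof (cases "v \<le> u")
    case True then show ?thesis using ordered[of v u] assms by simp
  next
    case False then show ?thesis using ordered[of u v] assms by (simp add: abs_minus_commute)
  qed
qed

lemma abs_one_minus_inverse_le:
  fixes S :: real
  assumes "1/2 \<le> S"
  shows "\<bar>1 - 1/S\<bar> \<le> 2 * \<bar>S - 1\<bar>"
proof -
  have "\<bar>1 - 1/S\<bar> = \<bar>S - 1\<bar> / S" using assms by (simp add: field_simps)
  also have "\<dots> \<le> \<bar>S - 1\<bar> / (1/2)" using assms by (intro divide_left_mono) auto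
  finally show ?thesis by simp
qed

lemma abs_ln_le_of_ge_half:
  fixes S :: real
  assumes "1/2 \<le> S"
  shows "\<bar>ln S\<bar> \<le> 2 * \<bar>S - 1\<bar>"
proof -
  have S: "0 < S" using assms by simp
  have "ln S \<le> S - 1" using ln_le_minus_one S .
  moreover have "1 - 1/S \<le> ln S" using ln_le_minus_one[of "1/S"] S by (simp add: ln_div)
  ultimately show ?thesis using abs_one_minus_inverse_le[OF assms] by (auto simp: abs_le_iff abs_if)
qed

lemma renormalization_error:
  fixes S c :: real
  assumes "1/2 \<le> S"
  shows "\<bar>c * (1 - 1/S) + ln S\<bar> \<le> 2 * \<bar>S - 1\<bar> * (\<bar>c\<bar> + 1)"
proof -
  have "\<bar>c * (1 - 1/S)\<bar> \<le> \<bar>c\<bar> * (2 * \<bar>S - 1\<bar>)"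
    unfolding abs_mult using abs_one_minus_inverse_le[OF assms] by (rule mult_left_mono) simp
  then show ?thesis using abs_ln_le_of_ge_half[OF assms] by (simp add: abs_le_iff algebra_simps)
qed

section \<open>Entropy of a truncated and renormalized mass function\<close>

lemma infsum_pmf_eq_prob: "infsum (pmf p) A = measure_pmf.prob p A"
  by (simp add: measure_pmf_conv_infsetsum infsetsum_infsum[OF pmf_abs_summable])

lemma entropy_pmf_eq_ln:
  "entropy_pmf b f = - infsum (\<lambda>x. f x * ln (f x)) {x. 0 < f x} / ln b"
proof -
  have "(\<lambda>x. f x * log b (f x)) = (\<lambda>x. f x * ln (f x) * (1 / ln b))"
    by (simp add: log_def)
  then show ?thesis unfolding entropy_pmf_def by (simp only: infsum_cmult_left') simp
qed

definition cond_mass :: "('a \<Rightarrow> real) \<Rightarrow> real \<Rightarrow> 'a \<Rightarrow> real" where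
  "cond_mass q \<epsilon> x = (if \<epsilon> \<le> q x then q x / sum q {y. \<epsilon> \<le> q y} else 0)"

lemma cond_emp_mass_eq_cond_mass: "cond_emp_mass X n \<epsilon> \<omega> = cond_mass (emp_mass X n \<omega>) \<epsilon>"
  by (auto simp: cond_emp_mass_def cond_mass_def Gamma_set_def)

lemma entropy_cond_mass:
  fixes q :: "'a \<Rightarrow> real" and \<epsilon> :: real
  defines "G \<equiv> {x. \<epsilon> \<le> q x}"
  defines "S \<equiv> sum q G"
  assumes "finite G" "0 < \<epsilon>" "0 < S"
  shows "entropy_pmf b (cond_mass q \<epsilon>) = (ln S - (\<Sum>x\<in>G. q x * ln (q x)) / S) / ln b"
proof -
  have pos: "0 < q x" if "x \<in> G" for x using that \<open>0 < \<epsilon>\<close> by (auto simp: G_def)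
  have cond: "cond_mass q \<epsilon> x = (if x \<in> G then q x / S else 0)" for x
    by (simp add: cond_mass_def G_def S_def)
  have support: "{x. 0 < cond_mass q \<epsilon> x} = G" using pos \<open>0 < S\<close> by (auto simp: cond)
  have "(\<Sum>x\<in>G. cond_mass q \<epsilon> x * ln (cond_mass q \<epsilon> x))
        = (\<Sum>x\<in>G. q x * ln (q x) / S - q x / S * ln S)"
    using pos \<open>0 < S\<close> by (intro sum.cong) (auto simp: cond ln_div field_simps)
  also have "\<dots> = (\<Sum>x\<in>G. q x * ln (q x)) / S - ln S"
    using \<open>0 < S\<close> by (simp add: sum_subtractf sum_divide_distrib[symmetric] sum_distrib_right[symmetric] S_def)
  finally show ?thesis
    unfolding entropy_pmf_eq_ln support using \<open>finite G\<close> by (simp add: diff_divide_distrib)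
qed

text \<open>The atoms that truncation at level \<epsilon> may lose when q is controlled only on {..<m}.\<close>

definition light_points :: "nat pmf \<Rightarrow> nat \<Rightarrow> real \<Rightarrow> nat set" where
  "light_points \<mu> m \<epsilon> = {x. 0 < pmf \<mu> x \<and> (m \<le> x \<or> pmf \<mu> x < 2 * \<epsilon>)}"

lemma prob_lessThan_eq:
  fixes \<mu> :: "'a::linorder pmf"
  shows "measure_pmf.prob \<mu> {..<m} = 1 - measure_pmf.prob \<mu> {m..}"
proof -
  have "{..<m} = UNIV - {m..}" by auto
  then show ?thesis using measure_pmf.prob_compl[of "{m..}" \<mu>] by simp
qed

lemma superlevel_subset_window:
  fixes q :: "nat \<Rightarrow> real"
  assumes sub: "\<And>F. finite F \<Longrightarrow> sum q F \<le> 1"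
    and close: "\<And>x. x < m \<Longrightarrow> \<bar>q x - pmf \<mu> x\<bar> \<le> t"
    and small: "real m * t + measure_pmf.prob \<mu> {m..} < \<epsilon>"
  shows "{x. \<epsilon> \<le> q x} \<subseteq> {..<m}"
proof (rule subsetI, rule ccontr)
  fix x assume "x \<in> {x. \<epsilon> \<le> q x}" "x \<notin> {..<m}"
  then have x: "\<epsilon> \<le> q x" "m \<le> x" by auto
  have "q x + sum q {..<m} \<le> 1" using sub[of "insert x {..<m}"] x by simp
  moreover have "sum (\<lambda>y. pmf \<mu> y - t) {..<m} \<le> sum q {..<m}"
    by (intro sum_mono) (use close in \<open>fastforce simp: abs_le_iff\<close>)
  moreover have "sum (pmf \<mu>) {..<m} = 1 - measure_pmf.prob \<mu> {m..}"
    using prob_lessThan_eq[of \<mu> m] measure_measure_pmf_finite[of "{..<m}" \<mu>] by simp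
  ultimately show False using small x by (simp add: sum_subtractf)
qed

lemma light_points_cover:
  fixes q :: "nat \<Rightarrow> real"
  assumes close: "\<And>x. x < m \<Longrightarrow> \<bar>q x - pmf \<mu> x\<bar> \<le> t" and "t \<le> \<epsilon>"
  shows "set_pmf \<mu> - {x. \<epsilon> \<le> q x} \<subseteq> light_points \<mu> m \<epsilon>"
proof
  fix x assume x: "x \<in> set_pmf \<mu> - {x. \<epsilon> \<le> q x}"
  have "pmf \<mu> x < 2 * \<epsilon>" if "x < m" using close[OF that] x \<open>t \<le> \<epsilon>\<close> by (auto simp: abs_le_iff)
  then show "x \<in> light_points \<mu> m \<epsilon>"
    using x by (cases "x < m") (auto simp: light_points_def set_pmf_iff not_le)
qed

lemma normalizer_close_to_one:
  fixes q :: "nat \<Rightarrow> real" and \<epsilon> :: real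
  defines "G \<equiv> {x. \<epsilon> \<le> q x}"
  assumes window: "G \<subseteq> {..<m}"
    and close: "\<And>x. x < m \<Longrightarrow> \<bar>q x - pmf \<mu> x\<bar> \<le> t" and "0 \<le> t" "t \<le> \<epsilon>"
  shows "\<bar>sum q G - 1\<bar> \<le> real m * t + measure_pmf.prob \<mu> (light_points \<mu> m \<epsilon>)"
proof -
  have fin: "finite G" using window finite_subset by blast
  have "\<bar>sum (\<lambda>x. q x - pmf \<mu> x) G\<bar> \<le> sum (\<lambda>_. t) G"
    using close window by (intro order_trans[OF sum_abs] sum_mono) auto
  also have "\<dots> \<le> real m * t"
    using card_mono[OF _ window] \<open>0 \<le> t\<close> by (simp add: mult_right_mono)
  finally have deviation: "\<bar>sum q G - sum (pmf \<mu>) G\<bar> \<le> real m * t" by (simp add: sum_subtractf)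
  have "measure_pmf.prob \<mu> (- G) = measure_pmf.prob \<mu> (set_pmf \<mu> - G)"
    using measure_Int_set_pmf[of \<mu> "- G"] by (simp add: Diff_eq Int_commute)
  also have "\<dots> \<le> measure_pmf.prob \<mu> (light_points \<mu> m \<epsilon>)"
    using light_points_cover[OF close \<open>t \<le> \<epsilon>\<close>] by (intro measure_pmf.finite_measure_mono) (auto simp: G_def)
  finally have lost: "measure_pmf.prob \<mu> (- G) \<le> measure_pmf.prob \<mu> (light_points \<mu> m \<epsilon>)" .
  have "sum (pmf \<mu>) G = 1 - measure_pmf.prob \<mu> (- G)"
    using measure_pmf.prob_compl[of G \<mu>] fin by (simp add: measure_measure_pmf_finite Compl_eq_Diff_UNIV)
  moreover have "0 \<le> measure_pmf.prob \<mu> (- G)" by simp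
  ultimately show ?thesis using deviation lost unfolding abs_le_iff by linarith
qed

lemma sum_xlnx_superlevel_diff:
  fixes q :: "nat \<Rightarrow> real" and \<epsilon> t :: real
  defines "G \<equiv> {x. \<epsilon> \<le> q x}"
  assumes "0 < \<epsilon>" "\<epsilon> \<le> 1" and window: "G \<subseteq> {..<m}"
    and sub: "\<And>F. finite F \<Longrightarrow> sum q F \<le> 1"
    and close: "\<And>x. x < m \<Longrightarrow> \<bar>q x - pmf \<mu> x\<bar> \<le> t" and "0 \<le> t" "t \<le> \<epsilon>/2"
  shows "\<bar>(\<Sum>x\<in>G. pmf \<mu> x * ln (pmf \<mu> x)) - (\<Sum>x\<in>G. q x * ln (q x))\<bar>
           \<le> real m * t * (ln (2/\<epsilon>) + 1)"
proof -
  have ln_pos: "0 \<le> ln (2/\<epsilon>) + 1" using \<open>0 < \<epsilon>\<close> \<open>\<epsilon> \<le> 1\<close> by simp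
  have "\<bar>\<Sum>x\<in>G. pmf \<mu> x * ln (pmf \<mu> x) - q x * ln (q x)\<bar> \<le> (\<Sum>x\<in>G. t * (ln (2/\<epsilon>) + 1))"
  proof (intro order_trans[OF sum_abs] sum_mono)
    fix x assume x: "x \<in> G"
    have q: "\<epsilon> \<le> q x" "q x \<le> 1" using x sub[of "{x}"] by (auto simp: G_def)
    have d: "\<bar>q x - pmf \<mu> x\<bar> \<le> t" using close window x by auto
    then have "\<epsilon>/2 \<le> pmf \<mu> x" using q \<open>t \<le> \<epsilon>/2\<close> by (auto simp: abs_le_iff)
    then have "\<bar>pmf \<mu> x * ln (pmf \<mu> x) - q x * ln (q x)\<bar> \<le> \<bar>pmf \<mu> x - q x\<bar> * (ln (1/(\<epsilon>/2)) + 1)"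
      using q \<open>0 < \<epsilon>\<close> pmf_le_1 by (intro abs_xlnx_diff_le) auto
    also have "\<dots> \<le> t * (ln (2/\<epsilon>) + 1)"
      using d ln_pos by (simp add: abs_minus_commute mult_right_mono)
    finally show "\<bar>pmf \<mu> x * ln (pmf \<mu> x) - q x * ln (q x)\<bar> \<le> t * (ln (2/\<epsilon>) + 1)" .
  qed
  also have "\<dots> \<le> real m * t * (ln (2/\<epsilon>) + 1)"
    using card_mono[OF _ window] \<open>0 \<le> t\<close> ln_pos
    by (simp add: mult.assoc mult_right_mono)
  finally show ?thesis by (simp add: sum_subtractf)
qed

lemma infsum_support_minus_finite:
  fixes h :: "nat \<Rightarrow> real"
  assumes "h summable_on UNIV" "finite G" "G \<subseteq> set_pmf \<mu>" "set_pmf \<mu> - G \<subseteq> L"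
  shows "\<bar>infsum h {x. 0 < pmf \<mu> x} - sum h G\<bar> \<le> infsum (\<lambda>x. \<bar>h x\<bar>) L"
proof -
  have summable: "h summable_on A" "(\<lambda>x. \<bar>h x\<bar>) summable_on A" for A
    using assms(1) summable_on_subset_banach[of h UNIV A] summable_on_iff_abs_summable_on_real
    by auto
  have "{x. 0 < pmf \<mu> x} = G \<union> (set_pmf \<mu> - G)" using assms(3) by (auto simp: set_pmf_iff)
  then have "infsum h {x. 0 < pmf \<mu> x} = sum h G + infsum h (set_pmf \<mu> - G)"
    using infsum_Un_disjoint[OF summable(1) summable(1), of G "set_pmf \<mu> - G"] assms(2) by simp
  moreover have "\<bar>infsum h (set_pmf \<mu> - G)\<bar> \<le> infsum (\<lambda>x. \<bar>h x\<bar>) (set_pmf \<mu> - G)"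
    using norm_infsum_bound[of h "set_pmf \<mu> - G"] summable(2) by simp
  moreover have "\<dots> \<le> infsum (\<lambda>x. \<bar>h x\<bar>) L"
    using assms(4) by (intro infsum_mono_neutral summable) auto
  ultimately show ?thesis by simp
qed

lemma entropy_cond_mass_perturbation:
  fixes \<mu> :: "nat pmf" and q :: "nat \<Rightarrow> real" and b \<epsilon> t :: real and m :: nat
  defines "h \<equiv> \<lambda>x. pmf \<mu> x * ln (pmf \<mu> x)"
  defines "P \<equiv> measure_pmf.prob \<mu> (light_points \<mu> m \<epsilon>)"
    and "R \<equiv> infsum (\<lambda>x. \<bar>h x\<bar>) (light_points \<mu> m \<epsilon>)"
    and "Hs \<equiv> infsum (\<lambda>x. \<bar>h x\<bar>) UNIV"
  assumes "1 < b" and h_summable: "h summable_on UNIV"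
    and sub: "\<And>F. finite F \<Longrightarrow> sum q F \<le> 1"
    and "0 < \<epsilon>" "\<epsilon> \<le> 1" "0 \<le> t" "t \<le> \<epsilon>/4"
    and close: "\<And>x. x < m \<Longrightarrow> \<bar>q x - pmf \<mu> x\<bar> \<le> t"
    and window_error: "real m * t * (ln (2/\<epsilon>) + 1) \<le> \<epsilon>/4"
    and tail: "measure_pmf.prob \<mu> {m..} \<le> \<epsilon>/2"
    and light: "\<epsilon> + P \<le> 1/2"
  shows "ln b * \<bar>entropy_pmf b (pmf \<mu>) - entropy_pmf b (cond_mass q \<epsilon>)\<bar>
           \<le> \<epsilon> + 2 * (\<epsilon> + P) * (Hs + 2) + R"
proof -
  define G where "G = {x. \<epsilon> \<le> q x}"
  define S where "S = sum q G"
  define c where "c = (\<Sum>x\<in>G. q x * ln (q x))"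
  have "real m * t \<le> real m * t * (ln (2/\<epsilon>) + 1)"
    using \<open>0 < \<epsilon>\<close> \<open>\<epsilon> \<le> 1\<close> \<open>0 \<le> t\<close> by (intro mult_le_cancel_left1[THEN iffD2]) (simp add: not_less)
  then have mt: "real m * t \<le> \<epsilon>/4" using window_error by linarith
  have window: "G \<subseteq> {..<m}"
    unfolding G_def using tail mt \<open>0 < \<epsilon>\<close> by (intro superlevel_subset_window[OF sub close]) auto
  have fin: "finite G" using window finite_subset by blast
  have "\<bar>S - 1\<bar> \<le> real m * t + P"
    unfolding S_def G_def P_def using window \<open>0 \<le> t\<close> \<open>t \<le> \<epsilon>/4\<close> \<open>0 < \<epsilon>\<close>
    by (intro normalizer_close_to_one close) (auto simp: G_def)
  then have S: "\<bar>S - 1\<bar> \<le> \<epsilon> + P" using mt \<open>0 < \<epsilon>\<close> by linarith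
  then have S_half: "1/2 \<le> S" using light by (auto simp: abs_le_iff)
  have "\<bar>sum h G - c\<bar> \<le> real m * t * (ln (2/\<epsilon>) + 1)"
    unfolding h_def c_def G_def using window \<open>0 < \<epsilon>\<close> \<open>\<epsilon> \<le> 1\<close> \<open>0 \<le> t\<close> \<open>t \<le> \<epsilon>/4\<close>
    by (intro sum_xlnx_superlevel_diff sub close) (auto simp: G_def)
  then have hc: "\<bar>sum h G - c\<bar> \<le> \<epsilon>/4" using window_error by linarith
  have "\<bar>sum h G\<bar> \<le> Hs"
    unfolding Hs_def using fin h_summable summable_on_iff_abs_summable_on_real
    by (intro order_trans[OF sum_abs] finite_sum_le_infsum) auto
  then have c: "\<bar>c\<bar> \<le> Hs + 1" using hc \<open>\<epsilon> \<le> 1\<close> by linarith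
  have "G \<subseteq> set_pmf \<mu>"
  proof
    fix x assume "x \<in> G"
    then show "x \<in> set_pmf \<mu>"
      using close[of x] window \<open>t \<le> \<epsilon>/4\<close> \<open>0 < \<epsilon>\<close> by (auto simp: G_def set_pmf_iff abs_le_iff)
  qed
  then have rest: "\<bar>infsum h {x. 0 < pmf \<mu> x} - sum h G\<bar> \<le> R"
    unfolding R_def using light_points_cover[OF close] \<open>t \<le> \<epsilon>/4\<close> \<open>0 < \<epsilon>\<close>
    by (intro infsum_support_minus_finite h_summable fin) (auto simp: G_def)
  have "2 * \<bar>S - 1\<bar> * (\<bar>c\<bar> + 1) \<le> 2 * (\<epsilon> + P) * (Hs + 2)"
    using S c by (intro mult_mono) auto
  then have "\<bar>c * (1 - 1/S) + ln S\<bar> \<le> 2 * (\<epsilon> + P) * (Hs + 2)"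
    using renormalization_error[OF S_half, of c] by linarith
  moreover have "ln b * \<bar>entropy_pmf b (pmf \<mu>) - entropy_pmf b (cond_mass q \<epsilon>)\<bar>
      = \<bar>(infsum h {x. 0 < pmf \<mu> x} - sum h G) + (sum h G - c) + (c * (1 - 1/S) + ln S)\<bar>"
    using entropy_cond_mass[of \<epsilon> q, folded G_def, folded S_def] fin \<open>0 < \<epsilon>\<close> S_half \<open>1 < b\<close>
    unfolding entropy_pmf_eq_ln c_def h_def
    by (simp add: field_simps abs_mult)
  ultimately show ?thesis using rest hc \<open>0 < \<epsilon>\<close> unfolding abs_le_iff by linarith
qed

section \<open>Distributions with exponential tails\<close>

lemma summable_real_times_power:
  fixes r :: real
  assumes "0 \<le> r" "r < 1"
  shows "summable (\<lambda>j. real j * r^j)"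
proof (rule summable_ratio_test[where c = "(1 + r)/2" and N = "nat \<lceil>2 * r/(1 - r)\<rceil>"])
  show "(1 + r)/2 < 1" using assms by simp
  fix n assume "nat \<lceil>2 * r/(1 - r)\<rceil> \<le> n"
  then have "2 * r/(1 - r) \<le> real n" by linarith
  then have "(real n + 1) * r \<le> (1 + r)/2 * real n" using assms by (simp add: field_simps)
  then have "(real n + 1) * r * r^n \<le> (1 + r)/2 * real n * r^n"
    using assms by (intro mult_right_mono) auto
  then show "norm (real (Suc n) * r ^ Suc n) \<le> (1 + r)/2 * norm (real n * r^n)"
    using assms by (simp add: algebra_simps)
qed

lemma has_sum_atLeast_shift_nonneg:
  fixes g :: "nat \<Rightarrow> real"
  assumes "(\<lambda>k. g (j + k)) sums s" "\<And>x. j \<le> x \<Longrightarrow> 0 \<le> g x"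
  shows "(g has_sum s) {j..}"
proof -
  have "((\<lambda>k. g (j + k)) has_sum s) UNIV" by (rule sums_nonneg_imp_has_sum) (use assms in auto)
  moreover have "{j..} = (+) j ` UNIV" by (auto simp: image_iff) (metis le_add_diff_inverse)
  ultimately show ?thesis using has_sum_reindex[of "(+) j" UNIV g s] by (simp add: comp_def)
qed

lemma has_sum_linear_times_power_atLeast:
  fixes r a b :: real
  assumes "0 \<le> r" "r < 1" "0 \<le> a" "0 \<le> b"
  shows "((\<lambda>x. (a * real x + b) * r^x) has_sum
           r^j * ((a * real j + b) / (1 - r) + a * (\<Sum>k. real k * r^k))) {j..}"
proof (rule has_sum_atLeast_shift_nonneg)
  have geom: "(\<lambda>k. r^k) sums (1 / (1 - r))" using geometric_sums[of r] assms by simp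
  have lin: "(\<lambda>k. real k * r^k) sums (\<Sum>k. real k * r^k)"
    using summable_real_times_power[OF assms(1,2)] by (simp add: summable_sums)
  have "(\<lambda>k. r^j * ((a * real j + b) * r^k + a * (real k * r^k))) sums
          (r^j * ((a * real j + b) * (1 / (1 - r)) + a * (\<Sum>k. real k * r^k)))"
    by (intro sums_mult sums_add geom lin)
  then show "(\<lambda>k. (a * real (j + k) + b) * r^(j + k)) sums
               (r^j * ((a * real j + b) / (1 - r) + a * (\<Sum>k. real k * r^k)))"
    by (simp add: power_add add_divide_distrib algebra_simps)
qed (use assms in auto)

locale exp_tailed_pmf =
  fixes \<mu> :: "nat pmf" and \<alpha> k0 k1 N :: real
  assumes alpha_pos: "0 < \<alpha>" and k0_pos: "0 < k0" and k0_le_k1: "k0 \<le> k1" and N_pos: "0 < N"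
    and pmf_exp_bounds: "\<And>x. N \<le> real x \<Longrightarrow>
          k0 * exp (- \<alpha> * real x) \<le> pmf \<mu> x \<and> pmf \<mu> x \<le> k1 * exp (- \<alpha> * real x)"
begin

lemma exp_power_eq: "exp (- \<alpha>) ^ x = exp (- \<alpha> * real x)"
  by (simp add: exp_of_nat_mult[symmetric] mult.commute)

lemma pmf_le_exp_power: "N \<le> real x \<Longrightarrow> pmf \<mu> x \<le> k1 * exp (- \<alpha>) ^ x"
  using pmf_exp_bounds by (simp add: exp_power_eq)

lemma abs_xlnx_pmf_le:
  assumes "N \<le> real x"
  shows "\<bar>pmf \<mu> x * ln (pmf \<mu> x)\<bar> \<le> k1 * ((\<alpha> * real x + \<bar>ln k0\<bar>) * exp (- \<alpha>) ^ x)"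
proof (cases "pmf \<mu> x = 0")
  case True
  then show ?thesis using alpha_pos k0_pos k0_le_k1 by simp
next
  case False
  then have p: "0 < pmf \<mu> x" using pmf_nonneg[of \<mu> x] by linarith
  have "ln (k0 * exp (- \<alpha> * real x)) \<le> ln (pmf \<mu> x)"
    using pmf_exp_bounds[OF assms] k0_pos p by (subst ln_le_cancel_iff) auto
  then have "- ln (pmf \<mu> x) \<le> \<alpha> * real x + \<bar>ln k0\<bar>" using k0_pos by (simp add: ln_mult)
  moreover have "\<bar>pmf \<mu> x * ln (pmf \<mu> x)\<bar> = pmf \<mu> x * (- ln (pmf \<mu> x))"
    using p pmf_le_1[of \<mu> x] by (simp add: abs_mult)
  ultimately have "\<bar>pmf \<mu> x * ln (pmf \<mu> x)\<bar> \<le> pmf \<mu> x * (\<alpha> * real x + \<bar>ln k0\<bar>)"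
    using mult_left_mono[of "- ln (pmf \<mu> x)" "\<alpha> * real x + \<bar>ln k0\<bar>" "pmf \<mu> x"] p by simp
  also have "\<dots> \<le> k1 * exp (- \<alpha> * real x) * (\<alpha> * real x + \<bar>ln k0\<bar>)"
    using pmf_exp_bounds[OF assms] alpha_pos by (intro mult_right_mono) auto
  finally show ?thesis by (simp add: exp_power_eq algebra_simps)
qed

lemma infsum_exp_tail_le:
  fixes f :: "nat \<Rightarrow> real" and a b s :: real
  defines "r \<equiv> exp (- \<alpha>)"
  assumes D: "D \<subseteq> {x. N \<le> real x \<and> s \<le> real x}" and "0 \<le> a" "0 \<le> b"
    and bound: "\<And>x. N \<le> real x \<Longrightarrow> 0 \<le> f x \<and> f x \<le> k1 * ((a * real x + b) * r^x)"
  shows "f summable_on D"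
    and "infsum f D \<le> k1 * exp (- \<alpha> * s) * ((a * max s 0 + a + b) / (1 - r) + a * (\<Sum>k. real k * r^k))"
proof -
  define j where "j = nat \<lceil>s\<rceil>"
  have r: "0 \<le> r" "r < 1" using alpha_pos by (auto simp: r_def)
  have k1: "0 < k1" using k0_pos k0_le_k1 by simp
  have Dj: "D \<subseteq> {j..}" using D by (auto simp: j_def)
  have g: "((\<lambda>x. k1 * ((a * real x + b) * r^x)) has_sum
            k1 * (r^j * ((a * real j + b) / (1 - r) + a * (\<Sum>k. real k * r^k)))) {j..}"
    using has_sum_linear_times_power_atLeast[OF r \<open>0 \<le> a\<close> \<open>0 \<le> b\<close>] by (rule has_sum_cmult_right)
  have g_summable: "(\<lambda>x. k1 * ((a * real x + b) * r^x)) summable_on D"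
    using summable_on_subset_banach[OF has_sum_imp_summable[OF g] Dj] .
  show f_summable: "f summable_on D"
    using bound D by (intro summable_on_comparison_test[OF g_summable]) auto
  have "infsum f D \<le> k1 * (r^j * ((a * real j + b) / (1 - r) + a * (\<Sum>k. real k * r^k)))"
    unfolding infsumI[OF g, symmetric]
    using bound D Dj k1 r \<open>0 \<le> a\<close> \<open>0 \<le> b\<close>
    by (intro infsum_mono_neutral f_summable has_sum_imp_summable[OF g]) auto
  also have "\<dots> \<le> k1 * (exp (- \<alpha> * s) * ((a * max s 0 + a + b) / (1 - r) + a * (\<Sum>k. real k * r^k)))"
  proof -
    have "r^j \<le> exp (- \<alpha> * s)"
      using alpha_pos real_nat_ceiling_ge[of s] by (simp add: r_def exp_power_eq j_def)
    moreover have "real j \<le> max s 0 + 1"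
      unfolding j_def using of_int_ceiling_le_add_one[of s] by (cases "0 \<le> s") auto
    from mult_left_mono[OF this \<open>0 \<le> a\<close>] have "a * real j + b \<le> a * max s 0 + a + b"
      by (simp add: distrib_left)
    then have "(a * real j + b) / (1 - r) + a * (\<Sum>k. real k * r^k)
                 \<le> (a * max s 0 + a + b) / (1 - r) + a * (\<Sum>k. real k * r^k)"
      using r by (simp add: divide_right_mono)
    moreover have "0 \<le> (a * real j + b) / (1 - r) + a * (\<Sum>k. real k * r^k)"
      using r \<open>0 \<le> a\<close> \<open>0 \<le> b\<close> summable_real_times_power[OF r]
      by (intro add_nonneg_nonneg mult_nonneg_nonneg divide_nonneg_pos suminf_nonneg) auto
    ultimately show ?thesis using k1 by (intro mult_left_mono mult_mono) auto
  qed
  finally show "infsum f D \<le> k1 * exp (- \<alpha> * s) * ((a * max s 0 + a + b) / (1 - r) + a * (\<Sum>k. real k * r^k))"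
    by (simp add: mult.assoc)
qed

lemma finite_below_N: "finite {x. real x < N}"
proof -
  have "{x. real x < N} \<subseteq> {..nat \<lceil>N\<rceil>}" by (auto simp: le_nat_iff) linarith
  then show ?thesis by (rule finite_subset) simp
qed

lemma xlnx_pmf_summable: "(\<lambda>x. pmf \<mu> x * ln (pmf \<mu> x)) summable_on UNIV"
proof -
  have "(\<lambda>x. \<bar>pmf \<mu> x * ln (pmf \<mu> x)\<bar>) summable_on {x. N \<le> real x}"
  proof (rule infsum_exp_tail_le(1)[where a = \<alpha> and b = "\<bar>ln k0\<bar>" and s = 0])
    show "\<And>x. N \<le> real x \<Longrightarrow> 0 \<le> \<bar>pmf \<mu> x * ln (pmf \<mu> x)\<bar> \<and>
            \<bar>pmf \<mu> x * ln (pmf \<mu> x)\<bar> \<le> k1 * ((\<alpha> * real x + \<bar>ln k0\<bar>) * exp (- \<alpha>) ^ x)"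
      using abs_xlnx_pmf_le by simp
  qed (use alpha_pos in auto)
  then have tail: "(\<lambda>x. pmf \<mu> x * ln (pmf \<mu> x)) summable_on {x. N \<le> real x}"
    using summable_on_iff_abs_summable_on_real[of "\<lambda>x. pmf \<mu> x * ln (pmf \<mu> x)"] by simp
  from summable_on_union[OF tail summable_on_finite[OF finite_below_N]] show ?thesis
    by (simp add: Un_def not_le[symmetric])
qed

text \<open>
  The slack makes exp (- tail_slack) at most (1 - exp (- \<alpha>)) / (2 k1), so that the mass beyond
  window \<epsilon> is at most \<epsilon>/2, and at most k0/2, so that all atoms of mass below 2\<epsilon>
  lie beyond (- ln \<epsilon> - tail_slack) / \<alpha>.
\<close>

definition tail_slack :: real where
  "tail_slack = \<bar>ln (2 * k1 / (1 - exp (- \<alpha>)))\<bar> + \<bar>ln (k0 / 2)\<bar>"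

definition window :: "real \<Rightarrow> nat" where
  "window \<epsilon> = nat \<lceil>N + (tail_slack - ln \<epsilon>) / \<alpha>\<rceil>"

definition light_const :: real where
  "light_const = k1 * exp tail_slack *
     ((1 + \<alpha> + \<bar>ln k0\<bar>) / (1 - exp (- \<alpha>)) + \<alpha> * (\<Sum>k. real k * exp (- \<alpha>) ^ k))"

lemma tail_slack_nonneg: "0 \<le> tail_slack"
  by (simp add: tail_slack_def)

lemma window_ge: "N + (tail_slack - ln \<epsilon>) / \<alpha> \<le> real (window \<epsilon>)"
  unfolding window_def by (rule real_nat_ceiling_ge)

lemma window_powr_le:
  assumes "1 \<le> n" "0 \<le> \<tau>"
  shows "real (window (real n powr - \<tau>)) \<le> N + 1 + (tail_slack + \<tau> * ln (real n)) / \<alpha>"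
proof -
  have "ln (real n powr - \<tau>) = - \<tau> * ln (real n)" using assms by (simp add: ln_powr)
  moreover have "0 \<le> N + (tail_slack + \<tau> * ln (real n)) / \<alpha>"
    using N_pos tail_slack_nonneg alpha_pos assms by simp
  ultimately have "real (window (real n powr - \<tau>)) = of_int \<lceil>N + (tail_slack + \<tau> * ln (real n)) / \<alpha>\<rceil>"
    by (simp add: window_def)
  then show ?thesis
    using of_int_ceiling_le_add_one[of "N + (tail_slack + \<tau> * ln (real n)) / \<alpha>"] by linarith
qed

lemma light_const_nonneg: "0 \<le> light_const"
proof -
  have "0 \<le> (\<Sum>k. real k * exp (- \<alpha>) ^ k)"
    using summable_real_times_power[of "exp (- \<alpha>)"] alpha_pos by (intro suminf_nonneg) auto
  then show ?thesis
    using k0_pos k0_le_k1 alpha_pos unfolding light_const_def by (auto intro!: mult_nonneg_nonneg add_nonneg_nonneg)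
qed

lemma prob_beyond_window:
  assumes "0 < \<epsilon>" "\<epsilon> \<le> 1"
  shows "measure_pmf.prob \<mu> {window \<epsilon>..} \<le> \<epsilon>/2"
proof -
  define m where "m = window \<epsilon>"
  define r where "r = exp (- \<alpha>)"
  have r: "0 < r" "r < 1" using alpha_pos by (auto simp: r_def)
  have k1: "0 < k1" using k0_pos k0_le_k1 by simp
  have "ln \<epsilon> \<le> 0" using assms by simp
  then have "0 \<le> (tail_slack - ln \<epsilon>) / \<alpha>" using alpha_pos tail_slack_nonneg by simp
  then have "N \<le> real m" using window_ge[of \<epsilon>] unfolding m_def by linarith
  then have "infsum (pmf \<mu>) {m..} \<le> k1 * exp (- \<alpha> * real m) *
              ((0 * max (real m) 0 + 0 + 1) / (1 - r) + 0 * (\<Sum>k. real k * r^k))"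
    unfolding r_def by (intro infsum_exp_tail_le(2)) (use pmf_le_exp_power in auto)
  then have "measure_pmf.prob \<mu> {m..} \<le> k1 * exp (- \<alpha> * real m) * (1 / (1 - r))"
    by (simp add: infsum_pmf_eq_prob)
  also have "\<dots> \<le> k1 * (\<epsilon> / exp tail_slack) * (1 / (1 - r))"
  proof -
    have "(tail_slack - ln \<epsilon>) / \<alpha> \<le> real m"
      using window_ge[of \<epsilon>] N_pos unfolding m_def by linarith
    then have "tail_slack - ln \<epsilon> \<le> \<alpha> * real m" using alpha_pos by (simp add: field_simps)
    then have "exp (- \<alpha> * real m) \<le> exp (ln \<epsilon> - tail_slack)" by simp
    then have "exp (- \<alpha> * real m) \<le> \<epsilon> / exp tail_slack" using assms by (simp add: exp_diff)
    then show ?thesis by (intro mult_right_mono mult_left_mono) (use k1 r in auto)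
  qed
  also have "\<dots> \<le> k1 * (\<epsilon> / (2 * k1 / (1 - r))) * (1 / (1 - r))"
  proof -
    have "ln (2 * k1 / (1 - r)) \<le> tail_slack" by (simp add: tail_slack_def r_def)
    then have "exp (ln (2 * k1 / (1 - r))) \<le> exp tail_slack" by simp
    then have "2 * k1 / (1 - r) \<le> exp tail_slack" using k1 r by simp
    then have "\<epsilon> / exp tail_slack \<le> \<epsilon> / (2 * k1 / (1 - r))"
      using assms k1 r by (intro divide_left_mono) auto
    then show ?thesis using k1 r by (intro mult_right_mono mult_left_mono) auto
  qed
  also have "\<dots> = \<epsilon>/2" using k1 r by (simp add: field_simps)
  finally show ?thesis by (simp add: m_def)
qed

lemma light_points_window_subset:
  assumes "0 < \<epsilon>" "\<epsilon> \<le> 1"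
    and atoms: "\<And>x. real x < N \<Longrightarrow> 0 < pmf \<mu> x \<Longrightarrow> 2 * \<epsilon> \<le> pmf \<mu> x"
  shows "light_points \<mu> (window \<epsilon>) \<epsilon> \<subseteq> {x. N \<le> real x \<and> (- ln \<epsilon> - tail_slack) / \<alpha> \<le> real x}"
proof
  fix x assume x: "x \<in> light_points \<mu> (window \<epsilon>) \<epsilon>"
  have "ln \<epsilon> \<le> 0" using assms by simp
  then have "(- ln \<epsilon> - tail_slack) / \<alpha> \<le> (tail_slack - ln \<epsilon>) / \<alpha>" "0 \<le> (tail_slack - ln \<epsilon>) / \<alpha>"
    using alpha_pos tail_slack_nonneg by (auto simp: divide_right_mono)
  then have win: "N \<le> real (window \<epsilon>)" "(- ln \<epsilon> - tail_slack) / \<alpha> \<le> real (window \<epsilon>)"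
    using window_ge[of \<epsilon>] N_pos by linarith+
  show "x \<in> {x. N \<le> real x \<and> (- ln \<epsilon> - tail_slack) / \<alpha> \<le> real x}"
  proof (cases "window \<epsilon> \<le> x")
    case True
    then show ?thesis using win by auto
  next
    case False
    then have small: "pmf \<mu> x < 2 * \<epsilon>" "0 < pmf \<mu> x" using x by (auto simp: light_points_def)
    then have N: "N \<le> real x" using atoms[of x] by force
    have "k0 * exp (- \<alpha> * real x) < 2 * \<epsilon>" using pmf_exp_bounds[OF N] small by linarith
    then have "ln (k0 * exp (- \<alpha> * real x)) < ln (2 * \<epsilon>)"
      using k0_pos assms by (subst ln_less_cancel_iff) auto
    then have "ln (k0 / 2) - ln \<epsilon> < \<alpha> * real x" using k0_pos assms by (simp add: ln_mult ln_div)
    moreover have "- tail_slack \<le> ln (k0 / 2)" by (simp add: tail_slack_def)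
    ultimately have "- ln \<epsilon> - tail_slack \<le> \<alpha> * real x" by linarith
    then show ?thesis using N alpha_pos by (simp add: field_simps)
  qed
qed

lemma exp_light_threshold:
  "0 < \<epsilon> \<Longrightarrow> exp (- \<alpha> * ((- ln \<epsilon> - tail_slack) / \<alpha>)) = exp tail_slack * \<epsilon>"
  using alpha_pos by (simp add: exp_add)

lemma prob_light_points_le:
  assumes "0 < \<epsilon>" "\<epsilon> \<le> 1"
    and atoms: "\<And>x. real x < N \<Longrightarrow> 0 < pmf \<mu> x \<Longrightarrow> 2 * \<epsilon> \<le> pmf \<mu> x"
  shows "measure_pmf.prob \<mu> (light_points \<mu> (window \<epsilon>) \<epsilon>) \<le> light_const * \<epsilon>"
proof -
  define r where "r = exp (- \<alpha>)"
  define Cr where "Cr = (\<Sum>k. real k * r^k)"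
  have r: "0 < r" "r < 1" using alpha_pos by (auto simp: r_def)
  have Cr: "0 \<le> Cr" unfolding Cr_def using summable_real_times_power[of r] r by (intro suminf_nonneg) auto
  have k1: "0 < k1" using k0_pos k0_le_k1 by simp
  have "infsum (pmf \<mu>) (light_points \<mu> (window \<epsilon>) \<epsilon>)
          \<le> k1 * exp (- \<alpha> * ((- ln \<epsilon> - tail_slack) / \<alpha>)) *
             ((0 * max ((- ln \<epsilon> - tail_slack) / \<alpha>) 0 + 0 + 1) / (1 - r) + 0 * Cr)"
    unfolding r_def Cr_def
    by (rule infsum_exp_tail_le(2)[OF light_points_window_subset[OF assms]])
       (use pmf_le_exp_power in auto)
  also have "\<dots> = k1 * exp tail_slack * \<epsilon> * (1 / (1 - r))"
    using exp_light_threshold[OF \<open>0 < \<epsilon>\<close>] by simp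
  also have "\<dots> \<le> k1 * exp tail_slack * \<epsilon> * ((1 + \<alpha> + \<bar>ln k0\<bar>) / (1 - r) + \<alpha> * Cr)"
    using r Cr alpha_pos k1 \<open>0 < \<epsilon>\<close>
    by (intro mult_left_mono add_increasing2 divide_right_mono mult_nonneg_nonneg) auto
  finally show ?thesis by (simp add: infsum_pmf_eq_prob light_const_def r_def Cr_def algebra_simps)
qed

lemma xlnx_light_points_le:
  assumes "0 < \<epsilon>" "\<epsilon> \<le> 1"
    and atoms: "\<And>x. real x < N \<Longrightarrow> 0 < pmf \<mu> x \<Longrightarrow> 2 * \<epsilon> \<le> pmf \<mu> x"
  shows "infsum (\<lambda>x. \<bar>pmf \<mu> x * ln (pmf \<mu> x)\<bar>) (light_points \<mu> (window \<epsilon>) \<epsilon>)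
           \<le> light_const * \<epsilon> * (1 - ln \<epsilon>)"
proof -
  define r where "r = exp (- \<alpha>)"
  define Cr where "Cr = (\<Sum>k. real k * r^k)"
  define s where "s = (- ln \<epsilon> - tail_slack) / \<alpha>"
  define A where "A = \<alpha> + \<bar>ln k0\<bar>"
  have r: "0 < r" "r < 1" using alpha_pos by (auto simp: r_def)
  have Cr: "0 \<le> Cr" unfolding Cr_def using summable_real_times_power[of r] r by (intro suminf_nonneg) auto
  have k1: "0 < k1" using k0_pos k0_le_k1 by simp
  have L: "0 \<le> - ln \<epsilon>" using assms by simp
  have "\<alpha> * max s 0 \<le> - ln \<epsilon>"
    using alpha_pos tail_slack_nonneg L by (auto simp: s_def max_def)
  then have "(\<alpha> * max s 0 + \<alpha> + \<bar>ln k0\<bar>) / (1 - r) + \<alpha> * Cr \<le> (- ln \<epsilon> + A) / (1 - r) + \<alpha> * Cr"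
    using r by (simp add: A_def divide_right_mono)
  also have "\<dots> \<le> ((1 + A) / (1 - r) + \<alpha> * Cr) * (1 - ln \<epsilon>)"
  proof -
    have "0 \<le> A * (- ln \<epsilon>)" using L alpha_pos unfolding A_def by (intro mult_nonneg_nonneg) auto
    moreover have "(1 + A) * (1 - ln \<epsilon>) = 1 + A - ln \<epsilon> + A * (- ln \<epsilon>)" by (simp add: algebra_simps)
    ultimately have "- ln \<epsilon> + A \<le> (1 + A) * (1 - ln \<epsilon>)" by linarith
    then have "(- ln \<epsilon> + A) / (1 - r) \<le> (1 + A) * (1 - ln \<epsilon>) / (1 - r)"
      using r by (simp add: divide_right_mono)
    moreover have "\<alpha> * Cr \<le> \<alpha> * Cr * (1 - ln \<epsilon>)"
      using L mult_nonneg_nonneg[OF less_imp_le[OF alpha_pos] Cr] by (simp add: mult_le_cancel_left1 not_less)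
    ultimately show ?thesis by (simp add: algebra_simps)
  qed
  finally have factor: "(\<alpha> * max s 0 + \<alpha> + \<bar>ln k0\<bar>) / (1 - r) + \<alpha> * Cr
                          \<le> ((1 + A) / (1 - r) + \<alpha> * Cr) * (1 - ln \<epsilon>)" .
  have "infsum (\<lambda>x. \<bar>pmf \<mu> x * ln (pmf \<mu> x)\<bar>) (light_points \<mu> (window \<epsilon>) \<epsilon>)
          \<le> k1 * exp (- \<alpha> * s) * ((\<alpha> * max s 0 + \<alpha> + \<bar>ln k0\<bar>) / (1 - r) + \<alpha> * Cr)"
    unfolding r_def Cr_def s_def
    by (rule infsum_exp_tail_le(2)[OF light_points_window_subset[OF assms]])
       (use alpha_pos abs_xlnx_pmf_le in auto)
  also have "\<dots> \<le> k1 * exp tail_slack * \<epsilon> * (((1 + A) / (1 - r) + \<alpha> * Cr) * (1 - ln \<epsilon>))"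
    using factor exp_light_threshold[OF \<open>0 < \<epsilon>\<close>] k1 \<open>0 < \<epsilon>\<close> by (simp add: s_def mult_left_mono)
  finally show ?thesis by (simp add: light_const_def A_def r_def Cr_def algebra_simps)
qed

lemma eventually_atoms_below_N:
  assumes "(f \<longlongrightarrow> 0) F"
  shows "eventually (\<lambda>n. \<forall>x. real x < N \<longrightarrow> 0 < pmf \<mu> x \<longrightarrow> 2 * f n \<le> pmf \<mu> x) F"
proof -
  have "finite {x. real x < N \<and> 0 < pmf \<mu> x}"
    using finite_below_N by (rule finite_subset[rotated]) auto
  then have "eventually (\<lambda>n. \<forall>x\<in>{x. real x < N \<and> 0 < pmf \<mu> x}. 2 * f n \<le> pmf \<mu> x) F"
  proof (rule eventually_ball_finite, safe)
    fix x assume "0 < pmf \<mu> x"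
    then show "eventually (\<lambda>n. 2 * f n \<le> pmf \<mu> x) F"
      using order_tendstoD(2)[OF assms, of "pmf \<mu> x / 2"] by (auto elim: eventually_mono)
  qed
  then show ?thesis by (auto elim: eventually_mono)
qed

definition entropy_const :: real where
  "entropy_const = 1 + 2 * (1 + light_const) * (infsum (\<lambda>x. \<bar>pmf \<mu> x * ln (pmf \<mu> x)\<bar>) UNIV + 2)
     + light_const"

lemma entropy_const_nonneg: "0 \<le> entropy_const"
proof -
  have "0 \<le> infsum (\<lambda>x. \<bar>pmf \<mu> x * ln (pmf \<mu> x)\<bar>) UNIV" by (rule infsum_nonneg) simp
  then show ?thesis using light_const_nonneg by (simp add: entropy_const_def)
qed

lemma entropy_cond_mass_window_le:
  fixes q :: "nat \<Rightarrow> real" and b \<epsilon> t :: real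
  assumes "1 < b" and sub: "\<And>F. finite F \<Longrightarrow> sum q F \<le> 1"
    and "0 < \<epsilon>" "\<epsilon> \<le> 1" "0 \<le> t" "t \<le> \<epsilon>/4"
    and close: "\<And>x. x < window \<epsilon> \<Longrightarrow> \<bar>q x - pmf \<mu> x\<bar> \<le> t"
    and window_error: "real (window \<epsilon>) * t * (ln (2/\<epsilon>) + 1) \<le> \<epsilon>/4"
    and small: "(1 + light_const) * \<epsilon> \<le> 1/2"
    and atoms: "\<And>x. real x < N \<Longrightarrow> 0 < pmf \<mu> x \<Longrightarrow> 2 * \<epsilon> \<le> pmf \<mu> x"
  shows "ln b * \<bar>entropy_pmf b (pmf \<mu>) - entropy_pmf b (cond_mass q \<epsilon>)\<bar>
           \<le> entropy_const * \<epsilon> * (1 - ln \<epsilon>)"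
proof -
  define Hs where "Hs = infsum (\<lambda>x. \<bar>pmf \<mu> x * ln (pmf \<mu> x)\<bar>) UNIV"
  define P where "P = measure_pmf.prob \<mu> (light_points \<mu> (window \<epsilon>) \<epsilon>)"
  define R where "R = infsum (\<lambda>x. \<bar>pmf \<mu> x * ln (pmf \<mu> x)\<bar>) (light_points \<mu> (window \<epsilon>) \<epsilon>)"
  have P: "P \<le> light_const * \<epsilon>" unfolding P_def using prob_light_points_le[OF \<open>0 < \<epsilon>\<close> \<open>\<epsilon> \<le> 1\<close> atoms] .
  have R: "R \<le> light_const * \<epsilon> * (1 - ln \<epsilon>)"
    unfolding R_def using xlnx_light_points_le[OF \<open>0 < \<epsilon>\<close> \<open>\<epsilon> \<le> 1\<close> atoms] .
  have Hs: "0 \<le> Hs" unfolding Hs_def by (rule infsum_nonneg) simp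
  have L: "1 \<le> 1 - ln \<epsilon>" using \<open>0 < \<epsilon>\<close> \<open>\<epsilon> \<le> 1\<close> by simp
  have "ln b * \<bar>entropy_pmf b (pmf \<mu>) - entropy_pmf b (cond_mass q \<epsilon>)\<bar> \<le> \<epsilon> + 2 * (\<epsilon> + P) * (Hs + 2) + R"
    unfolding P_def R_def Hs_def
  proof (rule entropy_cond_mass_perturbation[OF \<open>1 < b\<close> xlnx_pmf_summable sub])
    show "measure_pmf.prob \<mu> {window \<epsilon>..} \<le> \<epsilon>/2" using prob_beyond_window assms by blast
    show "\<epsilon> + measure_pmf.prob \<mu> (light_points \<mu> (window \<epsilon>) \<epsilon>) \<le> 1/2"
      using P small unfolding P_def by (simp add: algebra_simps)
  qed (use assms in auto)
  also have "\<dots> \<le> \<epsilon> + 2 * ((1 + light_const) * \<epsilon>) * (Hs + 2) + light_const * \<epsilon> * (1 - ln \<epsilon>)"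
    using P R Hs \<open>0 < \<epsilon>\<close> by (intro add_mono mult_right_mono order_refl) (auto simp: algebra_simps)
  also have "\<dots> \<le> entropy_const * \<epsilon> * (1 - ln \<epsilon>)"
  proof -
    have "0 \<le> (1 + 2 * (1 + light_const) * (Hs + 2)) * \<epsilon>"
      using Hs light_const_nonneg \<open>0 < \<epsilon>\<close> by simp
    then have "(1 + 2 * (1 + light_const) * (Hs + 2)) * \<epsilon> \<le> (1 + 2 * (1 + light_const) * (Hs + 2)) * \<epsilon> * (1 - ln \<epsilon>)"
      using L by (simp add: mult_le_cancel_left1 not_less)
    then show ?thesis by (simp add: entropy_const_def Hs_def algebra_simps)
  qed
  finally show ?thesis .
qed

lemma entropy_cond_mass_bigo:
  fixes Q :: "nat \<Rightarrow> nat \<Rightarrow> real" and b \<tau> \<beta> :: real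
  assumes "1 < b" "0 < \<tau>" "\<tau> < \<beta>"
    and sub: "\<And>n F. finite F \<Longrightarrow> sum (Q n) F \<le> 1"
    and close: "eventually (\<lambda>n. \<forall>x\<le>n. \<bar>Q n x - pmf \<mu> x\<bar> < real n powr - \<beta>) sequentially"
  shows "(\<lambda>n. \<bar>entropy_pmf b (pmf \<mu>) - entropy_pmf b (cond_mass (Q n) (real n powr - \<tau>))\<bar>)
           \<in> O(\<lambda>n. real n powr - \<tau> * ln (real n))"
proof -
  define W where "W n = N + 1 + (tail_slack + \<tau> * ln (real n)) / \<alpha>" for n :: nat
  define C where "C = entropy_const * (1 + \<tau>) / ln b"
  have "eventually (\<lambda>n. 1 \<le> ln (real n)) sequentially" by real_asymp
  moreover have "eventually (\<lambda>n. real n powr - \<tau> \<le> 1) sequentially"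
    using \<open>0 < \<tau>\<close> by real_asymp
  moreover have "eventually (\<lambda>n. real n powr - \<beta> \<le> real n powr - \<tau> / 4) sequentially"
    using \<open>\<tau> < \<beta>\<close> by real_asymp
  moreover have "eventually (\<lambda>n. W n * real n powr - \<beta> * (ln 2 + \<tau> * ln (real n) + 1)
                                  \<le> real n powr - \<tau> / 4) sequentially"
    using \<open>\<tau> < \<beta>\<close> alpha_pos unfolding W_def by real_asymp
  moreover have "eventually (\<lambda>n. W n \<le> real n) sequentially"
    using alpha_pos unfolding W_def by real_asymp
  moreover have "eventually (\<lambda>n. (1 + light_const) * real n powr - \<tau> \<le> 1/2) sequentially"
    using \<open>0 < \<tau>\<close> by real_asymp
  moreover have "eventually (\<lambda>n. \<forall>x. real x < N \<longrightarrow> 0 < pmf \<mu> x \<longrightarrow> 2 * real n powr - \<tau> \<le> pmf \<mu> x)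
                   sequentially"
    using \<open>0 < \<tau>\<close> by (intro eventually_atoms_below_N) real_asymp
  ultimately have "eventually (\<lambda>n. \<bar>entropy_pmf b (pmf \<mu>) - entropy_pmf b (cond_mass (Q n) (real n powr - \<tau>))\<bar>
                      \<le> C * \<bar>real n powr - \<tau> * ln (real n)\<bar>) sequentially"
    using close
  proof eventually_elim
    case (elim n)
    define \<epsilon> where "\<epsilon> = real n powr - \<tau>"
    define t where "t = real n powr - \<beta>"
    have n: "0 < n" using elim(1) by (cases n) auto
    have \<epsilon>: "0 < \<epsilon>" "\<epsilon> \<le> 1" using n elim(2) by (auto simp: \<epsilon>_def)
    have ln_\<epsilon>: "ln \<epsilon> = - \<tau> * ln (real n)" using n by (simp add: \<epsilon>_def ln_powr)
    have mW: "real (window \<epsilon>) \<le> W n" using window_powr_le[of n] n \<open>0 < \<tau>\<close> by (simp add: \<epsilon>_def W_def)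
    have close_n: "\<bar>Q n x - pmf \<mu> x\<bar> \<le> t" if "x < window \<epsilon>" for x
    proof -
      have "real x < real n" using that mW elim(5) by (simp add: of_nat_less_iff[symmetric])
      then show ?thesis using elim(8) by (auto simp: t_def less_imp_le)
    qed
    have "real (window \<epsilon>) * t * (ln (2/\<epsilon>) + 1) \<le> W n * t * (ln (2/\<epsilon>) + 1)"
      using mW \<epsilon> by (intro mult_right_mono) (auto simp: t_def)
    also have "\<dots> \<le> \<epsilon>/4" using elim(4) \<epsilon> ln_\<epsilon> by (simp add: ln_div t_def \<epsilon>_def)
    finally have window_error: "real (window \<epsilon>) * t * (ln (2/\<epsilon>) + 1) \<le> \<epsilon>/4" .
    have "ln b * \<bar>entropy_pmf b (pmf \<mu>) - entropy_pmf b (cond_mass (Q n) \<epsilon>)\<bar>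
            \<le> entropy_const * \<epsilon> * (1 - ln \<epsilon>)"
      by (rule entropy_cond_mass_window_le[OF \<open>1 < b\<close> sub \<epsilon> _ _ close_n window_error])
         (use elim(3,6,7) in \<open>auto simp: t_def \<epsilon>_def\<close>)
    also have "\<dots> \<le> entropy_const * \<epsilon> * ((1 + \<tau>) * ln (real n))"
      using elim(1) \<epsilon> entropy_const_nonneg \<open>0 < \<tau>\<close> unfolding ln_\<epsilon>
      by (intro mult_left_mono) (auto simp: algebra_simps)
    moreover have "0 \<le> \<epsilon> * ln (real n)" using \<epsilon> elim(1) by simp
    ultimately show ?case using \<open>1 < b\<close> by (simp add: C_def \<epsilon>_def field_simps)
  qed
  then show ?thesis by (intro bigoI[of _ C]) (auto elim!: eventually_mono)
qed

end

section \<open>Concentration of empirical masses\<close>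

lemma emp_mass_eq_sum_indicator:
  "emp_mass X n \<omega> x = (\<Sum>i<n. indicator {x} (X i \<omega>)) / real n"
proof -
  have "(\<Sum>i<n. indicator {x} (X i \<omega>) :: real) = (\<Sum>i\<in>{..<n}. if X i \<omega> = x then 1 else 0)"
    by (intro sum.cong) (auto simp: indicator_def)
  also have "\<dots> = (\<Sum>i\<in>{i\<in>{..<n}. X i \<omega> = x}. 1)" by (subst sum.inter_filter) auto
  also have "{i\<in>{..<n}. X i \<omega> = x} = {k. k < n \<and> X k \<omega> = x}" by auto
  finally show ?thesis by (simp add: emp_mass_def)
qed

lemma sum_emp_mass_le_1:
  assumes "finite F"
  shows "sum (emp_mass X n \<omega>) F \<le> 1"
proof (cases "n = 0")
  case True then show ?thesis by (simp add: emp_mass_def)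
next
  case False
  have "(\<Sum>x\<in>F. \<Sum>i<n. indicator {x} (X i \<omega>)) = (\<Sum>i<n. \<Sum>x\<in>F. indicator {x} (X i \<omega>) :: real)"
    by (rule sum.swap)
  also have "\<dots> \<le> (\<Sum>i<n. 1)"
  proof (rule sum_mono)
    fix i
    have "(\<Sum>x\<in>F. indicator {x} (X i \<omega>) :: real) = (\<Sum>x\<in>F. if x = X i \<omega> then 1 else 0)"
      by (intro sum.cong) (auto simp: indicator_def)
    then show "(\<Sum>x\<in>F. indicator {x} (X i \<omega>) :: real) \<le> 1" using assms by (simp add: sum.delta)
  qed
  finally show ?thesis
    using False by (simp add: emp_mass_eq_sum_indicator sum_divide_distrib[symmetric])
qed

lemma emp_mass_measurable [measurable]:
  assumes "\<And>i. X i \<in> measurable M (count_space UNIV)"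
  shows "(\<lambda>\<omega>. emp_mass X n \<omega> x) \<in> borel_measurable M"
  unfolding emp_mass_eq_sum_indicator
  by (intro borel_measurable_divide borel_measurable_sum measurable_compose[OF assms]) auto

lemma (in prob_space) prob_emp_mass_deviation:
  fixes X :: "nat \<Rightarrow> 'a \<Rightarrow> 'b" and \<mu> :: "'b pmf"
  assumes ind: "indep_vars (\<lambda>_. count_space UNIV) X UNIV"
    and dist: "\<And>i. distr M (count_space UNIV) (X i) = measure_pmf \<mu>"
    and "0 < n" "0 \<le> c"
  shows "prob {\<omega> \<in> space M. c \<le> \<bar>emp_mass X n \<omega> x - pmf \<mu> x\<bar>} \<le> 2 * exp (- 2 * real n * c^2)"
proof -
  define Y where "Y i \<omega> = (indicator {x} (X i \<omega>) :: real)" for i \<omega>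
  have X [measurable]: "X i \<in> measurable M (count_space UNIV)" for i
    using ind unfolding indep_vars_def by auto
  have "expectation (Y i) = integral\<^sup>L (distr M (count_space UNIV) (X i)) (indicator {x})" for i
    unfolding Y_def by (subst integral_distr) auto
  then have EY: "expectation (Y i) = pmf \<mu> x" for i by (simp add: dist measure_pmf_single)
  interpret H: Hoeffding_ineq M "{..<n}" Y "\<lambda>_. 0" "\<lambda>_. 1" "real n * pmf \<mu> x"
  proof unfold_locales
    show "indep_vars (\<lambda>_. borel) Y {..<n}"
      unfolding Y_def by (rule indep_vars_compose2[OF indep_vars_subset[OF ind]]) auto
  qed (auto simp: EY Y_def)
  have "{\<omega> \<in> space M. c \<le> \<bar>emp_mass X n \<omega> x - pmf \<mu> x\<bar>}
          = {\<omega> \<in> space M. real n * c \<le> \<bar>(\<Sum>i<n. Y i \<omega>) - real n * pmf \<mu> x\<bar>}"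
  proof -
    have "emp_mass X n \<omega> x - pmf \<mu> x = ((\<Sum>i<n. Y i \<omega>) - real n * pmf \<mu> x) / real n" for \<omega>
      using \<open>0 < n\<close> by (simp add: emp_mass_eq_sum_indicator Y_def field_simps)
    then show ?thesis using \<open>0 < n\<close> by (auto simp: pos_le_divide_eq mult.commute)
  qed
  also have "prob \<dots> \<le> 2 * exp (- 2 * (real n * c)\<^sup>2 / (\<Sum>i<n. (1 - 0)\<^sup>2))"
    using \<open>0 < n\<close> \<open>0 \<le> c\<close> by (intro H.Hoeffding_ineq_abs_ge) auto
  also have "\<dots> = 2 * exp (- 2 * real n * c^2)"
    using \<open>0 < n\<close> by (simp add: power2_eq_square)
  finally show ?thesis .
qed

lemma (in prob_space) AE_emp_mass_uniformly_close:
  fixes X :: "nat \<Rightarrow> 'a \<Rightarrow> nat" and \<mu> :: "nat pmf" and \<beta> :: real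
  assumes ind: "indep_vars (\<lambda>_. count_space UNIV) X UNIV"
    and dist: "\<And>i. distr M (count_space UNIV) (X i) = measure_pmf \<mu>"
    and "0 < \<beta>" "\<beta> < 1/2"
  shows "AE \<omega> in M. eventually (\<lambda>n. \<forall>x\<le>n. \<bar>emp_mass X n \<omega> x - pmf \<mu> x\<bar> < real n powr - \<beta>) sequentially"
proof -
  have X [measurable]: "X i \<in> measurable M (count_space UNIV)" for i
    using ind unfolding indep_vars_def by auto
  define A where "A n = (\<Union>x\<le>n. {\<omega> \<in> space M. real n powr - \<beta> \<le> \<bar>emp_mass X n \<omega> x - pmf \<mu> x\<bar>})" for n
  have A [measurable]: "A n \<in> sets M" for n unfolding A_def by measurable
  define bound where "bound n = (real n + 1) * (2 * exp (- 2 * real n powr (1 - 2 * \<beta>)))" for n :: nat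
  have A_le: "measure M (A n) \<le> bound n" if "0 < n" for n
  proof -
    have "measure M (A n) \<le> (\<Sum>x\<le>n. prob {\<omega> \<in> space M. real n powr - \<beta> \<le> \<bar>emp_mass X n \<omega> x - pmf \<mu> x\<bar>})"
      unfolding A_def by (rule finite_measure_subadditive_finite) auto
    also have "\<dots> \<le> (\<Sum>x\<le>n. 2 * exp (- 2 * real n * (real n powr - \<beta>)^2))"
      using that by (intro sum_mono prob_emp_mass_deviation[OF ind dist]) auto
    also have "\<dots> = bound n"
    proof -
      have e: "real n * (real n powr - \<beta>)^2 = real n powr (1 - 2 * \<beta>)"
        using that by (simp add: power2_eq_square powr_add[symmetric] powr_mult_base)
      have "(\<Sum>x\<le>n. 2 * exp (- 2 * real n * (real n powr - \<beta>)^2))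
              = (real n + 1) * (2 * exp (- 2 * (real n * (real n powr - \<beta>)^2)))"
        by (simp add: mult.assoc)
      then show ?thesis unfolding bound_def e .
    qed
    finally show ?thesis .
  qed
  have "summable bound"
  proof (rule summable_comparison_test_bigo)
    show "summable (\<lambda>n. norm (1 / real n ^ 2))" using inverse_power_summable[of 2] by (simp add: divide_inverse)
    show "bound \<in> O(\<lambda>n. 1 / real n ^ 2)" unfolding bound_def using \<open>\<beta> < 1/2\<close> by real_asymp
  qed
  moreover have "eventually (\<lambda>n. norm (measure M (A n)) \<le> bound n) sequentially"
    using eventually_gt_at_top[of 0] by eventually_elim (simp add: A_le)
  ultimately have "summable (\<lambda>n. measure M (A n))" by (rule summable_comparison_test_ev[rotated])
  then have "AE \<omega> in M. eventually (\<lambda>n. \<omega> \<in> space M - A n) sequentially"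
    by (intro borel_cantelli_AE1) (auto simp: less_top[symmetric])
  then show ?thesis by (elim AE_mp) (auto simp: A_def not_le elim!: eventually_mono)
qed

theorem theorem6:
  fixes M :: "'a measure" and X :: "nat \<Rightarrow> 'a \<Rightarrow> nat" and \<mu> :: "nat pmf"
    and b \<alpha> k0 k1 N \<tau> :: real
  assumes "prob_space M"
    and "b > 1"
    and "set_pmf \<mu> \<subseteq> {1..}"
    and "\<alpha> > 0" and "0 < k0" and "k0 \<le> k1" and "N > 0"
    and "\<And>x. real x \<ge> N \<Longrightarrow>
           k0 * exp (- \<alpha> * real x) \<le> pmf \<mu> x \<and> pmf \<mu> x \<le> k1 * exp (- \<alpha> * real x)"
    and "0 < \<tau>" and "\<tau> < 1/2"
    and "prob_space.indep_vars M (\<lambda>_. count_space UNIV) X UNIV"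
    and "\<And>i. distr M (count_space UNIV) (X i) = measure_pmf \<mu>"
  shows "AE \<omega> in M.
           (\<lambda>n. \<bar>entropy_pmf b (pmf \<mu>)
                  - entropy_pmf b (cond_emp_mass X n (real n powr (- \<tau>)) \<omega>)\<bar>)
           \<in> O(\<lambda>n. real n powr (- \<tau>) * ln (real n))"
proof -
  interpret M: prob_space M by (rule assms(1))
  interpret exp_tailed_pmf \<mu> \<alpha> k0 k1 N by unfold_locales (use assms(4-8) in auto)
  define \<beta> where "\<beta> = (\<tau> + 1/2) / 2"
  have \<beta>: "\<tau> < \<beta>" "0 < \<beta>" "\<beta> < 1/2" using assms(9,10) by (auto simp: \<beta>_def)
  show ?thesis
    using M.AE_emp_mass_uniformly_close[OF assms(11,12) \<beta>(2,3)]
  proof (rule AE_mp[OF _ AE_I2], intro impI)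
    fix \<omega>
    assume "eventually (\<lambda>n. \<forall>x\<le>n. \<bar>emp_mass X n \<omega> x - pmf \<mu> x\<bar> < real n powr - \<beta>) sequentially"
    then show "(\<lambda>n. \<bar>entropy_pmf b (pmf \<mu>) - entropy_pmf b (cond_emp_mass X n (real n powr - \<tau>) \<omega>)\<bar>)
                 \<in> O(\<lambda>n. real n powr - \<tau> * ln (real n))"
      unfolding cond_emp_mass_eq_cond_mass
      using entropy_cond_mass_bigo[OF assms(2,9) \<beta>(1), of "\<lambda>n. emp_mass X n \<omega>"]
      by (simp add: sum_emp_mass_le_1)
  qed
qed

end
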